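(* Let $G=(V,E)$ be a $D$-regular unweighted Ricci-flat graph with $D\ge2$ and $\mu\equiv\mu_0>0$, and let $\alpha\in(0,1)$. Let $x_*\in V$ and $\psi:V\to\mathbb R$ with $\psi(x_* )>0$ and $\psi(y)>0$ for all $y\sim x_*$. Let $v:V\to\mathbb R$ be such that $M(x):=\psi(x)\mathcal L_\alpha(v)(x)$ satisfies $M(x_* )>0$ and $M(x_* )\ge M(y)$ for all $y\sim x_*$. Then $$\mathcal C_\alpha(v)(x_* )\ge F_\alpha(Lv(x_* ))-\frac1{\mu_0}\mathcal L_\alpha(v)(x_* )\sum_{y\sim x_*}e^{v(y)-v(x_* )}\frac{|\psi(x_* )-\psi(y)|}{\psi(y)},$$ where $F_\alpha(a)=\frac{D}{\mu_0^2}\exp\big(-\frac{\mu_0(1-\alpha)}Da\big)\big[\exp\big(\frac{2(1-\alpha)\mu_0}Da\big)+\frac{1-\alpha}\alpha\exp\big(-\frac{2\alpha\mu_0}Da\big)-\frac1\alpha\big]$.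
   Context: Unweighted: $w_{xy}=1$. $\Delta u(x)=\frac1{\mu_0}\sum_{y\sim x}(u(y)-u(x))$, $L=-\Delta$, $\Psi_H(v)(x)=\frac1{\mu_0}\sum_{y\sim x}H(v(y)-v(x))$, $\Upsilon'(z)=e^z-1$. $\mathcal L_\alpha(v)(x)=-\frac1\alpha\Psi_{\Upsilon'}(\alpha v)(x)$; $\mathcal C_\alpha(v)(x)=\frac1{\mu_0}\sum_{y\sim x}e^{\alpha(v(y)-v(x))}(\Psi_{\Upsilon'}(v)(y)-\Psi_{\Upsilon'}(v)(x))$. Ricci-flat: $G$ is $D$-regular and for every $x$, with $N(x)=\{x\}\cup\{y:y\sim x\}$, there exist $\eta_1,\dots,\eta_D:N(x)\to V$ with (i) $\eta_i(y)\sim y$; (ii) $\eta_i(y)\neq\eta_j(y)$ for $i\ne j$; (iii) for each $i$, $(\eta_i(\eta_j(x)))_j$ and $(\eta_j(\eta_i(x)))_j$ coincide as multisets. *)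

theory Defs
  imports "HOL-Analysis.Analysis" "HOL-Library.Multiset"
begin

text \<open>Graphs: vertex set is the whole type 'a, adjacency E (symmetric, irreflexive).
 Unweighted (w_xy = 1), constant measure mu0.\<close>

definition nbrs :: "('a \<Rightarrow> 'a \<Rightarrow> bool) \<Rightarrow> 'a \<Rightarrow> 'a set" where
  "nbrs E x = {y. E x y}"

definition regular_graph :: "('a \<Rightarrow> 'a \<Rightarrow> bool) \<Rightarrow> nat \<Rightarrow> bool" where
  "regular_graph E D \<longleftrightarrow> (\<forall>x y. E x y \<longrightarrow> E y x) \<and> (\<forall>x. \<not> E x x)
     \<and> (\<forall>x. finite (nbrs E x) \<and> card (nbrs E x) = D)"

definition ricci_flat :: "('a \<Rightarrow> 'a \<Rightarrow> bool) \<Rightarrow> nat \<Rightarrow> bool" where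
  "ricci_flat E D \<longleftrightarrow> regular_graph E D \<and>
    (\<forall>x. \<exists>\<eta> :: nat \<Rightarrow> 'a \<Rightarrow> 'a.
       (\<forall>i<D. \<forall>y \<in> insert x (nbrs E x). E y (\<eta> i y)) \<and>
       (\<forall>i<D. \<forall>j<D. i \<noteq> j \<longrightarrow> (\<forall>y \<in> insert x (nbrs E x). \<eta> i y \<noteq> \<eta> j y)) \<and>
       (\<forall>i<D. mset (map (\<lambda>j. \<eta> i (\<eta> j x)) [0..<D]) = mset (map (\<lambda>j. \<eta> j (\<eta> i x)) [0..<D])))"

definition graph_laplacian :: "('a \<Rightarrow> 'a \<Rightarrow> bool) \<Rightarrow> real \<Rightarrow> ('a \<Rightarrow> real) \<Rightarrow> 'a \<Rightarrow> real" where
  "graph_laplacian E mu0 u x = (1 / mu0) * (\<Sum>y\<in>nbrs E x. u y - u x)"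

definition L_op :: "('a \<Rightarrow> 'a \<Rightarrow> bool) \<Rightarrow> real \<Rightarrow> ('a \<Rightarrow> real) \<Rightarrow> 'a \<Rightarrow> real" where
  "L_op E mu0 u x = - graph_laplacian E mu0 u x"

definition Psi :: "('a \<Rightarrow> 'a \<Rightarrow> bool) \<Rightarrow> real \<Rightarrow> (real \<Rightarrow> real) \<Rightarrow> ('a \<Rightarrow> real) \<Rightarrow> 'a \<Rightarrow> real" where
  "Psi E mu0 H v x = (1 / mu0) * (\<Sum>y\<in>nbrs E x. H (v y - v x))"

definition Upsilon' :: "real \<Rightarrow> real" where
  "Upsilon' z = exp z - 1"

definition L_alpha :: "('a \<Rightarrow> 'a \<Rightarrow> bool) \<Rightarrow> real \<Rightarrow> real \<Rightarrow> ('a \<Rightarrow> real) \<Rightarrow> 'a \<Rightarrow> real" where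
  "L_alpha E mu0 \<alpha> v x = - (1 / \<alpha>) * Psi E mu0 Upsilon' (\<lambda>z. \<alpha> * v z) x"

definition C_alpha :: "('a \<Rightarrow> 'a \<Rightarrow> bool) \<Rightarrow> real \<Rightarrow> real \<Rightarrow> ('a \<Rightarrow> real) \<Rightarrow> 'a \<Rightarrow> real" where
  "C_alpha E mu0 \<alpha> v x = (1 / mu0) * (\<Sum>y\<in>nbrs E x.
      exp (\<alpha> * (v y - v x)) * (Psi E mu0 Upsilon' v y - Psi E mu0 Upsilon' v x))"

definition F_alpha :: "nat \<Rightarrow> real \<Rightarrow> real \<Rightarrow> real \<Rightarrow> real" where
  "F_alpha D mu0 \<alpha> a = (real D / mu0 ^ 2) * exp (- (mu0 * (1 - \<alpha>) / real D) * a) *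
     (exp ((2 * (1 - \<alpha>) * mu0 / real D) * a) + ((1 - \<alpha>) / \<alpha>) * exp (- (2 * \<alpha> * mu0 / real D) * a) - 1 / \<alpha>)"

end

(*
  Write y_k = eta_k(x) for the neighbours of x, u_k = v(y_k) - v(x) and r_jk = v(eta_j(y_k)) - v(y_k).
  The commutation property of the Ricci-flat frames turns mu0^2 C_alpha(v)(x) into the double sum
  sum_k sum_j exp(u_k + (alpha - 1) u_j + r_jk) minus (sum_j exp(alpha u_j)) (sum_k exp(u_k)).
  In column k exactly one edge, j = tau(k), leads back to x, where r = -u_k. Bounding the other terms
  by the tangent line exp((a - 1) w + s) >= (1 - 1/a) exp(a w) + exp(a s)/a, and using the lower bound
  on sum_j exp(alpha r_jk) that the maximality of psi L_alpha(v) at x provides, leaves the single term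
  P_alpha(u_k, u_tau(k)). Since tau is a permutation, a rearrangement argument together with the
  convexity of phi_alpha(m) = P_alpha(m, m) bounds the sum of these terms below by D phi_alpha of the
  mean of u, which is mu0^2 F_alpha(Lv(x)).
*)
theory Submission
  imports Defs
begin

definition P_alpha :: "real \<Rightarrow> real \<Rightarrow> real \<Rightarrow> real" where
  "P_alpha a u w = exp ((a - 1) * w) + ((1 - a) / a) * exp (u + a * w) - (1 / a) * exp ((1 - a) * u)"

definition phi_alpha :: "real \<Rightarrow> real \<Rightarrow> real" where
  "phi_alpha a m = P_alpha a m m"

lemma phi_alpha_eq:
  "phi_alpha a m = exp ((a - 1) * m) + ((1 - a) / a) * exp ((1 + a) * m) - (1 / a) * exp ((1 - a) * m)"
  by (simp add: phi_alpha_def P_alpha_def algebra_simps)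

lemma exp_convex_comb_le:
  fixes a x y :: real
  assumes "0 \<le> a" "a \<le> 1"
  shows "exp (a * x + (1 - a) * y) \<le> a * exp x + (1 - a) * exp y"
  using convex_onD[OF exp_convex, of "1 - a" x y] assms by simp

lemma exp_one_minus_le:
  fixes a m :: real
  assumes "0 \<le> a" "a \<le> 1"
  shows "exp ((1 - a) * m) \<le> a * exp ((a - 1) * m) + (1 - a) * exp ((1 + a) * m)"
proof -
  have "a * ((a - 1) * m) + (1 - a) * ((1 + a) * m) = (1 - a) * m"
    by (simp add: algebra_simps)
  then show ?thesis
    using exp_convex_comb_le[OF assms, of "(a - 1) * m" "(1 + a) * m"] by simp
qed

lemma exp_tangent_ge:
  fixes a w s :: real
  assumes "0 < a" "a \<le> 1"
  shows "(1 - 1 / a) * exp (a * w) + exp (a * s) / a \<le> exp ((a - 1) * w + s)"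
proof -
  have "exp (a * (s - w)) \<le> a * exp (s - w) + (1 - a)"
    using exp_convex_comb_le[of a "s - w" 0] assms by simp
  then have "exp (a * w) * exp (a * (s - w)) \<le> exp (a * w) * (a * exp (s - w) + (1 - a))"
    by (simp add: mult_left_mono)
  then have "exp (a * s) \<le> a * exp ((a - 1) * w + s) + (1 - a) * exp (a * w)"
    by (simp add: mult_exp_exp algebra_simps)
  then show ?thesis
    using assms by (simp add: field_simps)
qed

lemma phi_alpha_nonneg:
  assumes "0 < a" "a < 1"
  shows "0 \<le> phi_alpha a m"
proof -
  have "phi_alpha a m = (a * exp ((a - 1) * m) + (1 - a) * exp ((1 + a) * m) - exp ((1 - a) * m)) / a"
    using assms by (simp add: phi_alpha_eq field_simps)
  then show ?thesis
    using exp_one_minus_le[of a m] assms by simp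
qed

lemma convex_on_phi_alpha:
  assumes a: "0 < a" "a < 1"
  shows "convex_on UNIV (phi_alpha a)"
proof (rule f''_ge0_imp_convex)
  let ?f' = "\<lambda>m. (a - 1) * exp ((a - 1) * m) + ((1 - a) / a) * (1 + a) * exp ((1 + a) * m)
      - (1 / a) * (1 - a) * exp ((1 - a) * m)"
  let ?f'' = "\<lambda>m. (a - 1)^2 * exp ((a - 1) * m) + ((1 - a) / a) * (1 + a)^2 * exp ((1 + a) * m)
      - (1 / a) * (1 - a)^2 * exp ((1 - a) * m)"
  show "convex (UNIV :: real set)" by simp
  fix m :: real
  show "(phi_alpha a has_real_derivative ?f' m) (at m)"
    unfolding phi_alpha_eq[abs_def] using a by (auto intro!: derivative_eq_intros simp: field_simps)
  show "(?f' has_real_derivative ?f'' m) (at m)"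
    using a by (auto intro!: derivative_eq_intros simp: field_simps power2_eq_square)
  have "(1 - a) * exp ((1 - a) * m) \<le> (1 - a) * (a * exp ((a - 1) * m) + (1 - a) * exp ((1 + a) * m))"
    using exp_one_minus_le[of a m] a by (simp add: mult_left_mono)
  also have "\<dots> \<le> a * (1 - a) * exp ((a - 1) * m) + (1 + a)^2 * exp ((1 + a) * m)"
    using a by (simp add: algebra_simps power2_eq_square)
  finally have "0 \<le> ((1 - a) / a) * (a * (1 - a) * exp ((a - 1) * m) + (1 + a)^2 * exp ((1 + a) * m)
      - (1 - a) * exp ((1 - a) * m))"
    using a by simp
  also have "\<dots> = ?f'' m"
    using a by (simp add: field_simps power2_eq_square)
  finally show "0 \<le> ?f'' m" .
qed

lemma P_alpha_shift: "P_alpha a (m + s) (m - s) = exp ((1 - a) * s) * phi_alpha a m"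
  by (simp add: phi_alpha_def P_alpha_def mult_exp_exp algebra_simps)

lemma P_alpha_pair_ge:
  assumes "0 < a" "a < 1"
  shows "2 * phi_alpha a ((x + y) / 2) \<le> P_alpha a x y + P_alpha a y x"
proof -
  define m s where "m = (x + y) / 2" and "s = (x - y) / 2"
  have "P_alpha a x y + P_alpha a y x = (exp ((1 - a) * s) + exp (- ((1 - a) * s))) * phi_alpha a m"
    using P_alpha_shift[of a m s] P_alpha_shift[of a m "- s"]
    by (simp add: m_def s_def field_simps)
  moreover have "2 \<le> exp ((1 - a) * s) + exp (- ((1 - a) * s))"
    using exp_ge_add_one_self[of "(1 - a) * s"] exp_ge_add_one_self[of "- ((1 - a) * s)"] by linarith
  ultimately show ?thesis
    using phi_alpha_nonneg[OF assms, of m] by (simp add: m_def mult_right_mono)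
qed

lemma exp_supermodular:
  fixes a :: real
  assumes "0 \<le> (x1 - x2) * (y1 - y2)" "0 \<le> a"
  shows "exp (x1 + a * y2) + exp (x2 + a * y1) \<le> exp (x1 + a * y1) + exp (x2 + a * y2)"
proof -
  have "0 \<le> (exp x1 - exp x2) * (exp (a * y1) - exp (a * y2))"
  proof (cases "x2 \<le> x1 \<and> y2 \<le> y1")
    case True
    then show ?thesis using assms(2) by (simp add: mult_left_mono)
  next
    case False
    with assms(1) have "x1 \<le> x2 \<and> y1 \<le> y2" by (auto simp: zero_le_mult_iff)
    then show ?thesis using assms(2) by (simp add: mult_left_mono mult_nonpos_nonpos)
  qed
  then show ?thesis by (simp add: exp_add algebra_simps)
qed

lemma sum_P_alpha_transpose_le:
  fixes u :: "'b \<Rightarrow> real"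
  assumes "finite J" "i \<in> J" "k \<in> J" "0 \<le> (u i - u k) * (u (p i) - u (p k))" "0 < a" "a < 1"
  shows "(\<Sum>x\<in>J. P_alpha a (u x) (u (p (Transposition.transpose i k x)))) \<le> (\<Sum>x\<in>J. P_alpha a (u x) (u (p x)))"
proof (cases "i = k")
  case False
  define R where "R = J - {i, k}"
  have J: "J = insert i (insert k R)" and R: "i \<notin> R" "k \<notin> R" "finite R"
    using assms False by (auto simp: R_def)
  have R_eq: "(\<Sum>x\<in>R. P_alpha a (u x) (u (p (Transposition.transpose i k x)))) = (\<Sum>x\<in>R. P_alpha a (u x) (u (p x)))"
    by (rule sum.cong) (auto simp: R_def)
  have "((1 - a) / a) * (exp (u i + a * u (p k)) + exp (u k + a * u (p i)))
      \<le> ((1 - a) / a) * (exp (u i + a * u (p i)) + exp (u k + a * u (p k)))"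
    using exp_supermodular[OF assms(4)] assms(5,6) by (intro mult_left_mono) auto
  then have "P_alpha a (u i) (u (p k)) + P_alpha a (u k) (u (p i))
      \<le> P_alpha a (u i) (u (p i)) + P_alpha a (u k) (u (p k))"
    by (simp add: P_alpha_def algebra_simps)
  then show ?thesis
    unfolding J using R False R_eq by simp
qed simp

lemma phi_alpha_split_le:
  fixes a x y S :: real and n :: nat
  assumes "0 < a" "a < 1" "n = 0 \<Longrightarrow> S = 0"
  shows "(n + 2) * phi_alpha a ((x + y + S) / (n + 2)) \<le> 2 * phi_alpha a ((x + y) / 2) + n * phi_alpha a (S / n)"
proof (cases "n = 0")
  case False
  define t :: real where "t = 2 / (n + 2)"
  have t: "0 \<le> t" "t \<le> 1" "1 - t = n / (n + 2)"
    by (auto simp: t_def field_simps)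
  have "(1 - t) * (S / n) = S / (n + 2)" "t * ((x + y) / 2) = (x + y) / (n + 2)"
    using False by (simp_all add: t(3) t_def field_simps)
  then have "(1 - t) *\<^sub>R (S / n) + t *\<^sub>R ((x + y) / 2) = (x + y + S) / (n + 2)"
    by (simp add: add_divide_distrib)
  then have "phi_alpha a ((x + y + S) / (n + 2)) \<le> (n / (n + 2)) * phi_alpha a (S / n) + t * phi_alpha a ((x + y) / 2)"
    using convex_onD[OF convex_on_phi_alpha[OF assms(1,2)] t(1,2), of "S / n" "(x + y) / 2"] t(3) by simp
  then have "(n + 2) * phi_alpha a ((x + y + S) / (n + 2))
      \<le> (n + 2) * ((n / (n + 2)) * phi_alpha a (S / n) + t * phi_alpha a ((x + y) / 2))"
    by (rule mult_left_mono) simp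
  also have "\<dots> = 2 * phi_alpha a ((x + y) / 2) + n * phi_alpha a (S / n)"
    by (simp add: t_def distrib_left add_pos_pos)
  finally show ?thesis .
qed (use assms in simp)

lemma P_alpha_pairing_perm:
  fixes u :: "'b \<Rightarrow> real"
  assumes J: "finite J" "bij_betw p J J" "j \<in> J" "k \<in> J" "j \<noteq> k"
    and max: "\<And>x. x \<in> J \<Longrightarrow> u x \<le> u j" and min: "\<And>x. x \<in> J \<Longrightarrow> u k \<le> u x"
    and a: "0 < a" "a < 1"
  obtains q where "bij_betw q J J" "q j = k" "q k = j"
    "(\<Sum>x\<in>J. P_alpha a (u x) (u (q x))) \<le> (\<Sum>x\<in>J. P_alpha a (u x) (u (p x)))"
proof -
  obtain b where b: "b \<in> J" "p b = k"
    using J by (metis bij_betw_iff_bijections)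
  define p1 where "p1 = p \<circ> Transposition.transpose j b"
  have "bij_betw p1 J J"
    unfolding p1_def using J b by (intro bij_betw_trans[OF _ J(2)]) simp
  then have p1: "bij_betw p1 J J" "p1 j = k"
    using b by (auto simp: p1_def)
  have p1_le: "(\<Sum>x\<in>J. P_alpha a (u x) (u (p1 x))) \<le> (\<Sum>x\<in>J. P_alpha a (u x) (u (p x)))"
    unfolding p1_def comp_def
  proof (rule sum_P_alpha_transpose_le[OF J(1,3) b(1) _ a])
    have "0 \<le> u j - u b" "0 \<le> u (p j) - u (p b)"
      using max[OF b(1)] min[of "p j"] b J(2,3) by (auto simp: bij_betw_def)
    then show "0 \<le> (u j - u b) * (u (p j) - u (p b))"
      by simp
  qed
  obtain b' where b': "b' \<in> J" "p1 b' = j"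
    using p1(1) J(3) by (metis bij_betw_iff_bijections)
  define q where "q = p1 \<circ> Transposition.transpose k b'"
  have "b' \<noteq> j"
    using b' p1(2) J(5) by auto
  moreover have "bij_betw q J J"
    unfolding q_def using J b' by (intro bij_betw_trans[OF _ p1(1)]) simp
  ultimately have q: "bij_betw q J J" "q j = k" "q k = j"
    using p1 b' J by (auto simp: q_def)
  have "(\<Sum>x\<in>J. P_alpha a (u x) (u (q x))) \<le> (\<Sum>x\<in>J. P_alpha a (u x) (u (p1 x)))"
    unfolding q_def comp_def
  proof (rule sum_P_alpha_transpose_le[OF J(1,4) b'(1) _ a])
    have "u k - u b' \<le> 0" "u (p1 k) - u (p1 b') \<le> 0"
      using min[OF b'(1)] max[of "p1 k"] b' p1(1) J(4) by (auto simp: bij_betw_def)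
    then show "0 \<le> (u k - u b') * (u (p1 k) - u (p1 b'))"
      by (rule mult_nonpos_nonpos)
  qed
  with p1_le q show ?thesis
    using that by simp
qed

text \<open>The rearrangement argument: a permutation can be modified, without increasing the sum,
  so that it swaps a maximal and a minimal value; these two terms are bounded by
  \<open>P_alpha_pair_ge\<close>, the rest by induction, and convexity of \<open>\<phi>\<close> merges the two bounds.\<close>
lemma sum_P_alpha_perm_ge:
  fixes u :: "'b \<Rightarrow> real"
  assumes a: "0 < a" "a < 1" and "finite J" "bij_betw p J J"
  shows "card J * phi_alpha a ((\<Sum>x\<in>J. u x) / card J) \<le> (\<Sum>x\<in>J. P_alpha a (u x) (u (p x)))"
  using assms(3,4)
proof (induction "card J" arbitrary: J p rule: less_induct)
  case less
  show ?case
  proof (cases "card J \<le> 1")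
    case True
    then consider "card J = 0" | "card J = 1"
      by linarith
    then consider "J = {}" | j where "J = {j}"
      using less.prems(1) by (metis card_0_eq card_1_singletonE)
    then show ?thesis
    proof cases
      case (2 j)
      then have "p j = j" using less.prems(2) by (auto simp: bij_betw_def)
      then show ?thesis using 2 by (simp add: phi_alpha_def)
    qed simp
  next
    case False
    then have "J \<noteq> {}" by auto
    then obtain k where k: "k \<in> J" "Min (u ` J) = u k"
      using obtains_MIN[OF less.prems(1)] by metis
    have min: "u k \<le> u x" if "x \<in> J" for x
      using k less.prems(1) that by (metis Min_le finite_imageI imageI)
    have "card (J - {k}) \<noteq> 0"
      using False k(1) less.prems(1) by (simp add: card_Diff_singleton)
    then have "J - {k} \<noteq> {}"
      by (metis card.empty)
    then obtain j where j: "j \<in> J - {k}" "Max (u ` (J - {k})) = u j"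
      using obtains_MAX[of "J - {k}" u] less.prems(1) by blast
    have max: "u x \<le> u j" if "x \<in> J" for x
    proof (cases "x = k")
      case False
      then have "u x \<le> Max (u ` (J - {k}))"
        using less.prems(1) that by (intro Max_ge) auto
      then show ?thesis using j by simp
    qed (use j min in auto)
    obtain q where q: "bij_betw q J J" "q j = k" "q k = j"
      and q_le: "(\<Sum>x\<in>J. P_alpha a (u x) (u (q x))) \<le> (\<Sum>x\<in>J. P_alpha a (u x) (u (p x)))"
      using P_alpha_pairing_perm[OF less.prems _ k(1) _ max min a] j by blast
    define J' where "J' = J - {j, k}"
    have J: "J = insert j (insert k J')" "j \<notin> J'" "k \<notin> J'" "j \<noteq> k" "finite J'"
      using j k less.prems(1) by (auto simp: J'_def)
    have "bij_betw q {j, k} {j, k}"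
      using q J(4) by (auto simp: bij_betw_def)
    then have "bij_betw q J' J'"
      unfolding J'_def using q(1) j k by (intro bij_betw_DiffI) auto
    then have IH: "card J' * phi_alpha a ((\<Sum>x\<in>J'. u x) / card J') \<le> (\<Sum>x\<in>J'. P_alpha a (u x) (u (q x)))"
      using less.hyps[of J'] J by simp
    have "card J * phi_alpha a ((\<Sum>x\<in>J. u x) / card J)
        = (card J' + 2) * phi_alpha a ((u j + u k + (\<Sum>x\<in>J'. u x)) / (card J' + 2))"
      using J by (simp add: add.assoc)
    also have "\<dots> \<le> 2 * phi_alpha a ((u j + u k) / 2) + card J' * phi_alpha a ((\<Sum>x\<in>J'. u x) / card J')"
      using phi_alpha_split_le[OF a, of "card J'" "\<Sum>x\<in>J'. u x"] J(5) by simp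
    also have "\<dots> \<le> P_alpha a (u j) (u k) + P_alpha a (u k) (u j) + (\<Sum>x\<in>J'. P_alpha a (u x) (u (q x)))"
      using P_alpha_pair_ge[OF a, of "u j" "u k"] IH by linarith
    also have "\<dots> = (\<Sum>x\<in>J. P_alpha a (u x) (u (q x)))"
      using J q by simp
    finally show ?thesis
      using q_le by linarith
  qed
qed

lemma exp_column_sum_ge:
  fixes U K :: real and w s :: "nat \<Rightarrow> real"
  assumes a: "0 < a" "a < 1" and i: "i < D" and s_i: "s i = - U"
    and K: "(\<Sum>j<D. exp (a * w j)) - K \<le> (\<Sum>j<D. exp (a * s j))"
  shows "exp U * (\<Sum>j<D. exp (a * w j)) + P_alpha a U (w i) - exp U * K / a
      \<le> (\<Sum>j<D. exp (U + (a - 1) * w j + s j))"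
proof -
  define T where "T j = exp U * ((1 - 1 / a) * exp (a * w j) + exp (a * s j) / a)" for j
  have tangent: "T j \<le> exp (U + (a - 1) * w j + s j)" for j
    using exp_tangent_ge[OF a(1), of "w j" "s j"] a
    by (simp add: T_def exp_add[of U, unfolded add.assoc] mult_left_mono add.assoc)
  have "exp (U + (a - 1) * w i + s i) - T i \<le> (\<Sum>j<D. exp (U + (a - 1) * w j + s j) - T j)"
    using i tangent by (intro member_le_sum) auto
  moreover have "exp (U + (a - 1) * w i + s i) - T i = P_alpha a U (w i)"
    using a s_i by (simp add: T_def P_alpha_def mult_exp_exp field_simps)
  moreover have "exp U * (\<Sum>j<D. exp (a * w j)) - exp U * K / a \<le> (\<Sum>j<D. T j)"
  proof -
    have "(1 - 1 / a) * (\<Sum>j<D. exp (a * w j)) + (\<Sum>j<D. exp (a * s j)) / a - ((\<Sum>j<D. exp (a * w j)) - K / a)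
        = ((\<Sum>j<D. exp (a * s j)) - ((\<Sum>j<D. exp (a * w j)) - K)) / a"
      using a by (simp add: field_simps)
    moreover have "0 \<le> ((\<Sum>j<D. exp (a * s j)) - ((\<Sum>j<D. exp (a * w j)) - K)) / a"
      using K a by simp
    ultimately have "(\<Sum>j<D. exp (a * w j)) - K / a
        \<le> (1 - 1 / a) * (\<Sum>j<D. exp (a * w j)) + (\<Sum>j<D. exp (a * s j)) / a"
      by linarith
    then have "exp U * ((\<Sum>j<D. exp (a * w j)) - K / a)
        \<le> exp U * ((1 - 1 / a) * (\<Sum>j<D. exp (a * w j)) + (\<Sum>j<D. exp (a * s j)) / a)"
      by (rule mult_left_mono) simp
    also have "\<dots> = (\<Sum>j<D. T j)"
      by (simp add: T_def sum.distrib sum_distrib_left sum_divide_distrib distrib_left)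
    finally show ?thesis
      by (simp add: right_diff_distrib)
  qed
  ultimately show ?thesis
    by (simp add: sum_subtractf)
qed

lemma exp_double_sum_ge:
  fixes u K :: "nat \<Rightarrow> real" and r :: "nat \<Rightarrow> nat \<Rightarrow> real"
  assumes a: "0 < a" "a < 1" and tau: "bij_betw \<tau> {..<D} {..<D}"
    and return: "\<And>k. k < D \<Longrightarrow> r (\<tau> k) k = - u k"
    and K: "\<And>k. k < D \<Longrightarrow> (\<Sum>j<D. exp (a * u j)) - K k \<le> (\<Sum>j<D. exp (a * r j k))"
  shows "D * phi_alpha a ((\<Sum>k<D. u k) / D) - (\<Sum>k<D. exp (u k) * K k) / a
    \<le> (\<Sum>k<D. \<Sum>j<D. exp (u k + (a - 1) * u j + r j k)) - (\<Sum>j<D. exp (a * u j)) * (\<Sum>k<D. exp (u k))"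
proof -
  let ?S = "\<Sum>j<D. exp (a * u j)"
  have "D * phi_alpha a ((\<Sum>k<D. u k) / D) \<le> (\<Sum>k<D. P_alpha a (u k) (u (\<tau> k)))"
    using sum_P_alpha_perm_ge[OF a _ tau, of u] by simp
  also have "\<dots> \<le> (\<Sum>k<D. (\<Sum>j<D. exp (u k + (a - 1) * u j + r j k)) - exp (u k) * ?S + exp (u k) * K k / a)"
    using exp_column_sum_ge[OF a _ return K] tau by (intro sum_mono) (fastforce simp: bij_betw_def)
  also have "\<dots> = (\<Sum>k<D. \<Sum>j<D. exp (u k + (a - 1) * u j + r j k)) - (\<Sum>k<D. exp (u k)) * ?S
      + (\<Sum>k<D. exp (u k) * K k) / a"
    by (simp add: sum.distrib sum_subtractf sum_distrib_right sum_divide_distrib)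
  finally show ?thesis
    by (simp add: mult.commute)
qed

lemma le_rel_diff_mult:
  fixes a b M L :: real
  assumes "0 < b" "0 \<le> L" "b * M \<le> a * L"
  shows "M \<le> (1 + \<bar>a - b\<bar> / b) * L"
proof -
  have "M \<le> (a / b) * L"
    using assms by (simp add: field_simps)
  also have "a / b = 1 + (a - b) / b"
    using assms(1) by (simp add: field_simps)
  also have "(1 + (a - b) / b) * L \<le> (1 + \<bar>a - b\<bar> / b) * L"
    using assms by (intro mult_right_mono add_left_mono divide_right_mono) auto
  finally show ?thesis .
qed

lemma F_alpha_eq_phi_alpha:
  "F_alpha D mu0 a t = real D / mu0^2 * phi_alpha a (- (mu0 / D) * t)"
proof -
  define m where "m = - (mu0 / D) * t"
  have exps: "- (mu0 * (1 - a) / D) * t = (1 - a) * m" "(2 * (1 - a) * mu0 / D) * t = - (2 * (1 - a) * m)"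
    "- (2 * a * mu0 / D) * t = 2 * a * m"
    by (simp_all add: m_def field_simps)
  have "F_alpha D mu0 a t = real D / mu0^2 *
      (exp ((1 - a) * m) * exp (- (2 * (1 - a) * m)) + ((1 - a) / a) * (exp ((1 - a) * m) * exp (2 * a * m))
        - (1 / a) * exp ((1 - a) * m))"
    unfolding F_alpha_def exps by (simp add: algebra_simps)
  also have "\<dots> = real D / mu0^2 * phi_alpha a m"
    by (simp add: phi_alpha_eq mult_exp_exp algebra_simps)
  finally show ?thesis
    by (simp add: m_def)
qed

lemma sum_lessThan_mset_cong:
  assumes "mset (map g1 [0..<n]) = mset (map g2 [0..<n])"
  shows "(\<Sum>j<n. f (g1 j)) = (\<Sum>j<n. f (g2 j))"
proof -
  have "(\<Sum>j<n. f (g j)) = sum_mset (image_mset f (mset (map g [0..<n])))" for g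
    by (simp add: sum_mset_sum_list sum_set_upt_conv_sum_list_nat[symmetric] atLeast0LessThan
        flip: mset_map)
  then show ?thesis
    using assms by metis
qed

locale ricci_frame =
  fixes E :: "'a \<Rightarrow> 'a \<Rightarrow> bool" and D :: nat and x :: 'a and \<eta> :: "nat \<Rightarrow> 'a \<Rightarrow> 'a"
  assumes regular: "regular_graph E D"
    and frame_edge: "\<And>i y. i < D \<Longrightarrow> y \<in> insert x (nbrs E x) \<Longrightarrow> E y (\<eta> i y)"
    and frame_distinct: "\<And>i j y. i < D \<Longrightarrow> j < D \<Longrightarrow> i \<noteq> j \<Longrightarrow> y \<in> insert x (nbrs E x) \<Longrightarrow> \<eta> i y \<noteq> \<eta> j y"
    and frame_commute: "\<And>i. i < D \<Longrightarrow> mset (map (\<lambda>j. \<eta> i (\<eta> j x)) [0..<D]) = mset (map (\<lambda>j. \<eta> j (\<eta> i x)) [0..<D])"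

lemma ricci_flat_obtains_frame:
  assumes "ricci_flat E D"
  obtains \<eta> where "ricci_frame E D x \<eta>"
  using assms unfolding ricci_flat_def ricci_frame_def by metis

context ricci_frame
begin

lemma card_nbrs [simp]: "card (nbrs E y) = D"
  using regular by (simp add: regular_graph_def)

lemma frame_mem: "k < D \<Longrightarrow> \<eta> k x \<in> insert x (nbrs E x)"
  by (simp add: frame_edge nbrs_def)

lemma bij_betw_frame:
  assumes y: "y \<in> insert x (nbrs E x)"
  shows "bij_betw (\<lambda>i. \<eta> i y) {..<D} (nbrs E y)"
proof -
  have "inj_on (\<lambda>i. \<eta> i y) {..<D}"
    using frame_distinct y by (auto simp: inj_on_def)
  moreover have "(\<lambda>i. \<eta> i y) ` {..<D} \<subseteq> nbrs E y"
    using frame_edge y by (auto simp: nbrs_def)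
  moreover have "finite (nbrs E y)" "card (nbrs E y) = D"
    using regular by (auto simp: regular_graph_def)
  ultimately show ?thesis
    by (metis bij_betw_def card_image card_lessThan card_subset_eq)
qed

lemma sum_nbrs_frame:
  "y \<in> insert x (nbrs E x) \<Longrightarrow> (\<Sum>z\<in>nbrs E y. f z) = (\<Sum>i<D. f (\<eta> i y))"
  using sum.reindex_bij_betw[OF bij_betw_frame] by metis

lemma sum_frame_commute:
  "i < D \<Longrightarrow> (\<Sum>j<D. f (\<eta> i (\<eta> j x))) = (\<Sum>j<D. f (\<eta> j (\<eta> i x)))"
  using sum_lessThan_mset_cong[OF frame_commute] by metis

text \<open>The \<open>k\<close>-th neighbour of \<open>x\<close> returns to \<open>x\<close> along its \<open>\<tau> k\<close>-th frame edge, and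
  \<open>\<tau>\<close> is a permutation because \<open>j \<mapsto> \<eta> i (\<eta> j x)\<close> is injective by \<open>frame_commute\<close>.\<close>
lemma obtains_return_perm:
  obtains \<tau> where "bij_betw \<tau> {..<D} {..<D}" "\<And>k. k < D \<Longrightarrow> \<eta> (\<tau> k) (\<eta> k x) = x"
proof -
  have "\<exists>i<D. \<eta> i (\<eta> k x) = x" if k: "k < D" for k
  proof -
    have "x \<in> nbrs E (\<eta> k x)"
      using frame_edge[OF k, of x] regular by (simp add: nbrs_def regular_graph_def)
    then show ?thesis
      using bij_betw_frame[OF frame_mem[OF k]] unfolding bij_betw_def by (metis imageE lessThan_iff)
  qed
  then obtain \<tau> where \<tau>: "\<And>k. k < D \<Longrightarrow> \<tau> k < D \<and> \<eta> (\<tau> k) (\<eta> k x) = x"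
    by metis
  have "inj_on \<tau> {..<D}"
  proof (rule inj_onI)
    fix k k' assume k: "k \<in> {..<D}" and k': "k' \<in> {..<D}" and eq: "\<tau> k = \<tau> k'"
    define i where "i = \<tau> k"
    have i: "i < D"
      using \<tau> k by (simp add: i_def)
    have "inj_on (\<lambda>j. \<eta> j (\<eta> i x)) {0..<D}"
      using bij_betw_frame[OF frame_mem[OF i]] by (simp add: bij_betw_def atLeast0LessThan)
    then have "distinct (map (\<lambda>j. \<eta> j (\<eta> i x)) [0..<D])"
      by (simp add: distinct_map)
    then have "distinct (map (\<lambda>j. \<eta> i (\<eta> j x)) [0..<D])"
      using mset_eq_imp_distinct_iff[OF frame_commute[OF i]] by simp
    then have "inj_on (\<lambda>j. \<eta> i (\<eta> j x)) {..<D}"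
      by (simp add: distinct_map atLeast0LessThan)
    moreover have "\<eta> i (\<eta> k x) = \<eta> i (\<eta> k' x)"
      using \<tau>[of k] \<tau>[of k'] k k' by (simp add: i_def eq)
    ultimately show "k = k'"
      using k k' by (auto dest: inj_onD)
  qed
  then have "bij_betw \<tau> {..<D} {..<D}"
    using \<tau> by (simp add: bij_betw_def endo_inj_surj image_subset_iff)
  with \<tau> show ?thesis
    using that by blast
qed

text \<open>\<open>incr v k\<close> and \<open>incr2 v j k\<close> are the \<open>u\<^sub>k\<close> and \<open>r\<^sub>j\<^sub>k\<close> of the proof sketch.\<close>
definition incr :: "('a \<Rightarrow> real) \<Rightarrow> nat \<Rightarrow> real" where
  "incr v k = v (\<eta> k x) - v x"

definition incr2 :: "('a \<Rightarrow> real) \<Rightarrow> nat \<Rightarrow> nat \<Rightarrow> real" where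
  "incr2 v j k = v (\<eta> j (\<eta> k x)) - v (\<eta> k x)"

lemma L_op_center: "L_op E mu0 v x = - (1 / mu0) * (\<Sum>k<D. incr v k)"
  by (simp add: L_op_def graph_laplacian_def sum_nbrs_frame incr_def)

lemma L_alpha_center:
  "L_alpha E mu0 \<alpha> v x = (real D - (\<Sum>k<D. exp (\<alpha> * incr v k))) / (\<alpha> * mu0)"
  by (simp add: L_alpha_def Psi_def Upsilon'_def sum_nbrs_frame incr_def sum_subtractf
      right_diff_distrib field_simps) (simp add: diff_divide_distrib)

lemma L_alpha_frame:
  "k < D \<Longrightarrow> L_alpha E mu0 \<alpha> v (\<eta> k x) = (real D - (\<Sum>j<D. exp (\<alpha> * incr2 v j k))) / (\<alpha> * mu0)"
  by (simp add: L_alpha_def Psi_def Upsilon'_def sum_nbrs_frame[OF frame_mem] incr2_def sum_subtractf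
      right_diff_distrib field_simps) (simp add: diff_divide_distrib)

lemma exp_incr2_sum_ge:
  fixes \<psi> :: "'a \<Rightarrow> real"
  assumes "0 < \<alpha>" "0 < mu0" "k < D" "0 < \<psi> (\<eta> k x)" "0 \<le> L_alpha E mu0 \<alpha> v x"
    and "\<psi> (\<eta> k x) * L_alpha E mu0 \<alpha> v (\<eta> k x) \<le> \<psi> x * L_alpha E mu0 \<alpha> v x"
  shows "(\<Sum>j<D. exp (\<alpha> * incr v j))
      - \<alpha> * mu0 * (L_alpha E mu0 \<alpha> v x * (\<bar>\<psi> x - \<psi> (\<eta> k x)\<bar> / \<psi> (\<eta> k x)))
    \<le> (\<Sum>j<D. exp (\<alpha> * incr2 v j k))"
proof -
  define c where "c = 1 + \<bar>\<psi> x - \<psi> (\<eta> k x)\<bar> / \<psi> (\<eta> k x)"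
  have "L_alpha E mu0 \<alpha> v (\<eta> k x) \<le> c * L_alpha E mu0 \<alpha> v x"
    unfolding c_def using assms(4-6) by (rule le_rel_diff_mult)
  then have "(\<Sum>j<D. exp (\<alpha> * incr v j)) - \<alpha> * mu0 * ((c - 1) * L_alpha E mu0 \<alpha> v x)
      \<le> (\<Sum>j<D. exp (\<alpha> * incr2 v j k))"
    using assms(1,2) unfolding L_alpha_frame[OF assms(3)] L_alpha_center by (simp add: field_simps)
  then show ?thesis
    by (simp add: c_def mult.commute)
qed

lemma Psi_Upsilon'_frame:
  assumes "j < D"
  shows "Psi E mu0 Upsilon' v (\<eta> j x)
    = ((\<Sum>k<D. exp (incr2 v j k + incr v k - incr v j)) - real D) / mu0"
proof -
  have "Psi E mu0 Upsilon' v (\<eta> j x) = (\<Sum>i<D. exp (v (\<eta> i (\<eta> j x)) - v (\<eta> j x)) - 1) / mu0"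
    by (simp add: Psi_def Upsilon'_def sum_nbrs_frame[OF frame_mem[OF assms]])
  also have "\<dots> = (\<Sum>k<D. exp (v (\<eta> j (\<eta> k x)) - v (\<eta> j x)) - 1) / mu0"
    using sum_frame_commute[OF assms, of "\<lambda>z. exp (v z - v (\<eta> j x)) - 1"] by simp
  finally show ?thesis
    by (simp add: incr_def incr2_def sum_subtractf)
qed

lemma C_alpha_center:
  "C_alpha E mu0 \<alpha> v x = ((\<Sum>k<D. \<Sum>j<D. exp (incr v k + (\<alpha> - 1) * incr v j + incr2 v j k))
      - (\<Sum>j<D. exp (\<alpha> * incr v j)) * (\<Sum>k<D. exp (incr v k))) / mu0^2"
proof -
  have Psi_x: "Psi E mu0 Upsilon' v x = ((\<Sum>k<D. exp (incr v k)) - real D) / mu0"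
    by (simp add: Psi_def Upsilon'_def sum_nbrs_frame incr_def sum_subtractf)
  have "exp (\<alpha> * incr v j) * (Psi E mu0 Upsilon' v (\<eta> j x) - Psi E mu0 Upsilon' v x)
      = ((\<Sum>k<D. exp (incr v k + (\<alpha> - 1) * incr v j + incr2 v j k))
          - exp (\<alpha> * incr v j) * (\<Sum>k<D. exp (incr v k))) / mu0" if "j < D" for j
    unfolding Psi_Upsilon'_frame[OF that] Psi_x
    by (simp add: sum_distrib_left mult_exp_exp diff_divide_distrib right_diff_distrib algebra_simps)
  then have "C_alpha E mu0 \<alpha> v x = (\<Sum>j<D. ((\<Sum>k<D. exp (incr v k + (\<alpha> - 1) * incr v j + incr2 v j k))
          - exp (\<alpha> * incr v j) * (\<Sum>k<D. exp (incr v k))) / mu0) / mu0"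
    by (simp add: C_alpha_def sum_nbrs_frame incr_def)
  also have "\<dots> = ((\<Sum>j<D. \<Sum>k<D. exp (incr v k + (\<alpha> - 1) * incr v j + incr2 v j k))
      - (\<Sum>j<D. exp (\<alpha> * incr v j)) * (\<Sum>k<D. exp (incr v k))) / mu0^2"
    by (simp add: sum_subtractf sum_divide_distrib[symmetric] sum_distrib_right power2_eq_square)
  also have "(\<Sum>j<D. \<Sum>k<D. exp (incr v k + (\<alpha> - 1) * incr v j + incr2 v j k))
      = (\<Sum>k<D. \<Sum>j<D. exp (incr v k + (\<alpha> - 1) * incr v j + incr2 v j k))"
    by (rule sum.swap)
  finally show ?thesis .
qed

lemma C_alpha_ge_F_alpha:
  assumes a: "0 < \<alpha>" "\<alpha> < 1" and "0 < mu0"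
    and K: "\<And>k. k < D \<Longrightarrow> (\<Sum>j<D. exp (\<alpha> * incr v j)) - \<alpha> * mu0 * K k \<le> (\<Sum>j<D. exp (\<alpha> * incr2 v j k))"
  shows "F_alpha D mu0 \<alpha> (L_op E mu0 v x) - (1 / mu0) * (\<Sum>k<D. exp (incr v k) * K k)
    \<le> C_alpha E mu0 \<alpha> v x"
proof -
  obtain \<tau> where \<tau>: "bij_betw \<tau> {..<D} {..<D}" "\<And>k. k < D \<Longrightarrow> \<eta> (\<tau> k) (\<eta> k x) = x"
    using obtains_return_perm by blast
  have "incr2 v (\<tau> k) k = - incr v k" if "k < D" for k
    using \<tau>(2)[OF that] by (simp add: incr_def incr2_def)
  then have "D * phi_alpha \<alpha> ((\<Sum>k<D. incr v k) / D) - (\<Sum>k<D. exp (incr v k) * (\<alpha> * mu0 * K k)) / \<alpha>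
    \<le> (\<Sum>k<D. \<Sum>j<D. exp (incr v k + (\<alpha> - 1) * incr v j + incr2 v j k))
      - (\<Sum>j<D. exp (\<alpha> * incr v j)) * (\<Sum>k<D. exp (incr v k))"
    using K by (intro exp_double_sum_ge[OF a \<tau>(1)]) auto
  moreover have "(\<Sum>k<D. exp (incr v k) * (\<alpha> * mu0 * K k)) / \<alpha> = mu0 * (\<Sum>k<D. exp (incr v k) * K k)"
    using a by (simp add: sum_distrib_left sum_divide_distrib mult_ac)
  ultimately have "D * phi_alpha \<alpha> ((\<Sum>k<D. incr v k) / D) - mu0 * (\<Sum>k<D. exp (incr v k) * K k)
      \<le> mu0^2 * C_alpha E mu0 \<alpha> v x"
    using \<open>0 < mu0\<close> by (simp add: C_alpha_center)
  moreover have "F_alpha D mu0 \<alpha> (L_op E mu0 v x) - (1 / mu0) * (\<Sum>k<D. exp (incr v k) * K k)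
      = (D * phi_alpha \<alpha> ((\<Sum>k<D. incr v k) / D) - mu0 * (\<Sum>k<D. exp (incr v k) * K k)) / mu0^2"
    using \<open>0 < mu0\<close> by (simp add: F_alpha_eq_phi_alpha L_op_center field_simps power2_eq_square)
  ultimately show ?thesis
    using \<open>0 < mu0\<close> by (simp add: pos_divide_le_eq mult.commute)
qed

end

theorem corollary5p1:
  fixes E :: "'a \<Rightarrow> 'a \<Rightarrow> bool" and D :: nat and mu0 \<alpha> :: real
    and xs :: 'a and \<psi> v :: "'a \<Rightarrow> real"
  assumes "ricci_flat E D" and "D \<ge> 2" and "mu0 > 0"
    and "0 < \<alpha>" and "\<alpha> < 1"
    and "\<psi> xs > 0" and "\<forall>y. E xs y \<longrightarrow> \<psi> y > 0"
    and "\<psi> xs * L_alpha E mu0 \<alpha> v xs > 0"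
    and "\<forall>y. E xs y \<longrightarrow> \<psi> xs * L_alpha E mu0 \<alpha> v xs \<ge> \<psi> y * L_alpha E mu0 \<alpha> v y"
  shows "C_alpha E mu0 \<alpha> v xs \<ge> F_alpha D mu0 \<alpha> (L_op E mu0 v xs)
     - (1 / mu0) * L_alpha E mu0 \<alpha> v xs *
       (\<Sum>y\<in>nbrs E xs. exp (v y - v xs) * \<bar>\<psi> xs - \<psi> y\<bar> / \<psi> y)"
proof -
  obtain \<eta> where "ricci_frame E D xs \<eta>"
    using ricci_flat_obtains_frame[OF assms(1)] .
  then interpret ricci_frame E D xs \<eta> .
  define \<delta> where "\<delta> k = L_alpha E mu0 \<alpha> v xs * (\<bar>\<psi> xs - \<psi> (\<eta> k xs)\<bar> / \<psi> (\<eta> k xs))" for k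
  have "0 \<le> L_alpha E mu0 \<alpha> v xs"
    using assms(6,8) by (simp add: zero_less_mult_iff)
  moreover have "E xs (\<eta> k xs)" if "k < D" for k
    using frame_edge[OF that] by simp
  ultimately have "(\<Sum>j<D. exp (\<alpha> * incr v j)) - \<alpha> * mu0 * \<delta> k \<le> (\<Sum>j<D. exp (\<alpha> * incr2 v j k))"
    if "k < D" for k
    using exp_incr2_sum_ge[OF assms(4,3) that] assms(7,9) that by (simp add: \<delta>_def)
  then have "F_alpha D mu0 \<alpha> (L_op E mu0 v xs) - (1 / mu0) * (\<Sum>k<D. exp (incr v k) * \<delta> k)
      \<le> C_alpha E mu0 \<alpha> v xs"
    using assms(3-5) by (intro C_alpha_ge_F_alpha) auto
  moreover have "(\<Sum>k<D. exp (incr v k) * \<delta> k) = L_alpha E mu0 \<alpha> v xs *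
      (\<Sum>y\<in>nbrs E xs. exp (v y - v xs) * \<bar>\<psi> xs - \<psi> y\<bar> / \<psi> y)"
    by (simp add: sum_nbrs_frame incr_def \<delta>_def sum_distrib_left mult_ac)
  ultimately show ?thesis
    by (simp add: mult.assoc)
qed

end
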